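(* Let $\mathbb X,\mathbb Y,\mathbb X^\sharp,\mathbb Y^\sharp$ be sets, $c:\mathbb X\times\mathbb X^\sharp\to\overline{\mathbb R}$ and $d:\mathbb Y\times\mathbb Y^\sharp\to\overline{\mathbb R}$ couplings, $E:\mathbb X\times\mathbb Y^\sharp\to\overline{\mathbb R}$ and $K:\mathbb X\times\mathbb Y\to\overline{\mathbb R}$. If $$K(x,y)\ge\sup_{y^\sharp\in\mathbb Y^\sharp}\big(d(y,y^\sharp)\mathbin{\underset{\cdot}{+}} E(x,y^\sharp)\big)\quad\text{for all }(x,y)\in\mathbb X\times\mathbb Y,$$ then $$K^{c\mathbin{\underset{\cdot}{+}} d}(x^\sharp,y^\sharp)\le\sup_{x\in\mathbb X}\big(c(x,x^\sharp)\mathbin{\underset{\cdot}{+}}(-E(x,y^\sharp))\big)\quad\text{for all }(x^\sharp,y^\sharp)\in\mathbb X^\sharp\times\mathbb Y^\sharp.$$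
   Context: $\overline{\mathbb R}=[-\infty,+\infty]$. The Moreau lower addition $\mathbin{\underset{\cdot}{+}}$ is usual addition extended by $(+\infty)\mathbin{\underset{\cdot}{+}}(-\infty)=(-\infty)\mathbin{\underset{\cdot}{+}}(+\infty)=-\infty$. $K^{c\mathbin{\underset{\cdot}{+}} d}(x^\sharp,y^\sharp)=\sup_{x\in\mathbb X,y\in\mathbb Y}\big(c(x,x^\sharp)\mathbin{\underset{\cdot}{+}} d(y,y^\sharp)\mathbin{\underset{\cdot}{+}}(-K(x,y))\big)$. *)

theory Defs
  imports "HOL-Library.Extended_Real"
begin

text \<open>Moreau lower addition on extended reals: usual addition, except
  that the sum of +infinity and -infinity (in either order) is -infinity.
  (The library's ereal addition gives +infinity in that case.)\<close>
definition lower_plus :: "ereal \<Rightarrow> ereal \<Rightarrow> ereal" (infixl "+\<^sub>." 65) where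
  "a +\<^sub>. b = (if (a = \<infinity> \<and> b = -\<infinity>) \<or> (a = -\<infinity> \<and> b = \<infinity>) then -\<infinity> else a + b)"

definition coupling_conj ::
  "'x set \<Rightarrow> 'y set \<Rightarrow> ('x \<Rightarrow> 'xs \<Rightarrow> ereal) \<Rightarrow> ('y \<Rightarrow> 'ys \<Rightarrow> ereal)
     \<Rightarrow> ('x \<Rightarrow> 'y \<Rightarrow> ereal) \<Rightarrow> 'xs \<Rightarrow> 'ys \<Rightarrow> ereal" where
  "coupling_conj X Y c d K xs ys =
     (SUP p \<in> X \<times> Y. c (fst p) xs +\<^sub>. d (snd p) ys +\<^sub>. (- K (fst p) (snd p)))"

end

theory Submission
  imports Defs
begin

text \<open>The hypothesis gives \<open>d y y\<^sup>\<sharp> +\<^sub>. E x y\<^sup>\<sharp> \<le> K x y\<close>, and lower addition lets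
  \<open>E\<close> and \<open>K\<close> be moved across this inequality, bounding each term of the conjugate
  by \<open>c x x\<^sup>\<sharp> +\<^sub>. (- E x y\<^sup>\<sharp>)\<close>. The convention \<open>\<infinity> +\<^sub>. -\<infinity> = -\<infinity>\<close> is what makes
  this cancellation valid in all infinite cases.\<close>

lemma lower_plus_uminus_le_if_lower_plus_le:
  fixes a b e k :: ereal
  assumes "b +\<^sub>. e \<le> k"
  shows "a +\<^sub>. b +\<^sub>. (- k) \<le> a +\<^sub>. (- e)"
  using assms
  by (cases a; cases b; cases e; cases k) (auto simp: lower_plus_def)

theorem lemma1:
  fixes X :: "'x set" and Y :: "'y set" and Xs :: "'xs set" and Ys :: "'ys set"
    and c :: "'x \<Rightarrow> 'xs \<Rightarrow> ereal" and d :: "'y \<Rightarrow> 'ys \<Rightarrow> ereal"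
    and E :: "'x \<Rightarrow> 'ys \<Rightarrow> ereal" and K :: "'x \<Rightarrow> 'y \<Rightarrow> ereal"
  assumes "\<forall>x\<in>X. \<forall>y\<in>Y. K x y \<ge> (SUP ys' \<in> Ys. d y ys' +\<^sub>. E x ys')"
  shows "\<forall>xs\<in>Xs. \<forall>ys\<in>Ys.
           coupling_conj X Y c d K xs ys \<le> (SUP x \<in> X. c x xs +\<^sub>. (- E x ys))"
proof (intro ballI)
  fix xs ys assume ys: "ys \<in> Ys"
  have term_le: "c x xs +\<^sub>. d y ys +\<^sub>. (- K x y) \<le> (SUP x \<in> X. c x xs +\<^sub>. (- E x ys))"
    if x: "x \<in> X" and y: "y \<in> Y" for x y
  proof -
    have "d y ys +\<^sub>. E x ys \<le> (SUP ys' \<in> Ys. d y ys' +\<^sub>. E x ys')"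
      using ys by (rule SUP_upper)
    also have "\<dots> \<le> K x y"
      using assms x y by blast
    finally have "c x xs +\<^sub>. d y ys +\<^sub>. (- K x y) \<le> c x xs +\<^sub>. (- E x ys)"
      by (rule lower_plus_uminus_le_if_lower_plus_le)
    also have "\<dots> \<le> (SUP x \<in> X. c x xs +\<^sub>. (- E x ys))"
      using x by (rule SUP_upper)
    finally show ?thesis .
  qed
  show "coupling_conj X Y c d K xs ys \<le> (SUP x \<in> X. c x xs +\<^sub>. (- E x ys))"
    unfolding coupling_conj_def by (rule SUP_least) (auto intro: term_le)
qed

end
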